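(* Let $\beta\in(0,1]$ and consider $N_r\to\infty$ with $N_t=\beta N_r$ (integer), with $\mathbf H$ an $N_r\times N_t$ matrix with i.i.d. $\mathcal{CN}(0,1)$ entries. Then the high-SNR power offset of the MMSE achievable sum rate, $\mathcal L_\infty^{\rm mmse}=\log_2N_t-\log_2e\big(\sum_{\ell=1}^{N_r-N_t}\frac1\ell-\gamma\big)$, converges to $\log_2\big(\frac{\beta}{1-\beta}\big)$ (interpreted as $+\infty$ when $\beta=1$).
   Context: $\gamma$ is the Euler–Mascheroni constant. The high-SNR power offset is $\mathcal L_\infty^{\rm mmse}=\lim_{\mathrm{snr}\to\infty}(\log_2\mathrm{snr}-I^{\rm mmse}/N_t)$, where $I^{\rm mmse}(\mathrm{snr})=\sum_{i=1}^{N_t}E[\log_2(1+\gamma_i)]$ with $\gamma_i=1/\big[(\mathbf I_{N_t}+\frac{\mathrm{snr}}{N_t}\mathbf H^\dagger\mathbf H)^{-1}\big]_{i,i}-1$. *)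

theory Defs
  imports "HOL-Analysis.Analysis"
begin

definition mmse_power_offset :: "nat \<Rightarrow> nat \<Rightarrow> real" where
  "mmse_power_offset Nr Nt =
     log 2 (real Nt) - log 2 (exp 1) * (harm (Nr - Nt) - euler_mascheroni)"

end

theory Submission
  imports Defs
begin

text \<open>Writing \<open>M = Nr - Nt\<close>, the offset equals
  \<open>log\<^sub>2 (Nt / M) - log\<^sub>2 e \<cdot> (H\<^sub>M - ln M - \<gamma>)\<close>. In the proportional regime \<open>Nt / M\<close> is the
  constant \<open>\<beta> / (1 - \<beta>)\<close> and \<open>H\<^sub>M - ln M \<rightarrow> \<gamma>\<close> as \<open>M \<rightarrow> \<infinity>\<close>, so only the logarithm of the
  ratio survives. When \<open>\<beta> = 1\<close> we have \<open>M = 0\<close>, the harmonic term vanishes, and the offset is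
  \<open>log\<^sub>2 Nt + log\<^sub>2 e \<cdot> \<gamma>\<close>, which diverges.\<close>

lemma mmse_power_offset_eq_log_ratio:
  assumes "0 < Nt" and "Nt < Nr"
  shows "mmse_power_offset Nr Nt =
           log 2 (real Nt / real (Nr - Nt))
           - (harm (Nr - Nt) - ln (real (Nr - Nt)) - euler_mascheroni) / ln 2"
  using assms by (simp add: mmse_power_offset_def log_def ln_div field_simps)

lemma mmse_power_offset_diag:
  "mmse_power_offset n n = log 2 (real n) + log 2 (exp 1) * euler_mascheroni"
  by (simp add: mmse_power_offset_def harm_expand(1))

lemma tendsto_harm_minus_ln:
  assumes "filterlim f at_top F"
  shows "((\<lambda>x. harm (f x) - ln (real (f x))) \<longlongrightarrow> euler_mascheroni) F"
  using filterlim_compose[OF euler_mascheroni_LIMSEQ assms] by (simp add: o_def)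

lemma tendsto_mmse_power_offset:
  assumes "filterlim (\<lambda>x. Nr x - Nt x) at_top F"
    and "eventually (\<lambda>x. 0 < Nt x \<and> Nt x < Nr x) F"
    and "((\<lambda>x. real (Nt x) / real (Nr x - Nt x)) \<longlongrightarrow> r) F" and "0 < r"
  shows "((\<lambda>x. mmse_power_offset (Nr x) (Nt x)) \<longlongrightarrow> log 2 r) F"
proof -
  have "((\<lambda>x. log 2 (real (Nt x) / real (Nr x - Nt x))
             - (harm (Nr x - Nt x) - ln (real (Nr x - Nt x)) - euler_mascheroni) / ln 2)
         \<longlongrightarrow> log 2 r - (euler_mascheroni - euler_mascheroni) / ln 2) F"
    using assms(3,4) tendsto_harm_minus_ln[OF assms(1)] by (intro tendsto_intros) auto
  moreover have "eventually (\<lambda>x. log 2 (real (Nt x) / real (Nr x - Nt x))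
             - (harm (Nr x - Nt x) - ln (real (Nr x - Nt x)) - euler_mascheroni) / ln 2
           = mmse_power_offset (Nr x) (Nt x)) F"
    using assms(2) by (rule eventually_mono) (simp add: mmse_power_offset_eq_log_ratio)
  ultimately show ?thesis
    by (auto intro: Lim_transform_eventually)
qed

lemma filterlim_mmse_power_offset_diag:
  assumes "filterlim N at_top F"
  shows "filterlim (\<lambda>x. mmse_power_offset (N x) (N x)) at_top F"
proof -
  have "filterlim (\<lambda>x. ln (real (N x)) * (1 / ln 2)) at_top F"
    using filterlim_compose[OF ln_at_top filterlim_compose[OF filterlim_real_sequentially assms]]
    by (intro filterlim_at_top_mult_tendsto_pos[OF tendsto_const]) (simp_all add: o_def)
  then have "filterlim (\<lambda>x. log 2 (real (N x))) at_top F"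
    by (simp add: log_def)
  then show ?thesis
    unfolding mmse_power_offset_diag add.commute[of "log 2 _"]
    by (rule filterlim_tendsto_add_at_top[OF tendsto_const])
qed

lemma tendsto_mmse_power_offset_proportional:
  assumes "0 < \<beta>" and "\<beta> < 1"
    and "filterlim Nr at_top sequentially"
    and "\<forall>k. real (Nt k) = \<beta> * real (Nr k)"
  shows "((\<lambda>k. mmse_power_offset (Nr k) (Nt k)) \<longlongrightarrow> log 2 (\<beta> / (1 - \<beta>))) sequentially"
proof -
  have gap: "real (Nr k - Nt k) = (1 - \<beta>) * real (Nr k)" for k
  proof -
    have "real (Nt k) \<le> real (Nr k)"
      using assms(2,4) mult_right_mono[of \<beta> 1 "real (Nr k)"] by simp
    then have "Nt k \<le> Nr k"
      by simp
    then show ?thesis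
      using assms(4) by (simp add: of_nat_diff algebra_simps)
  qed
  have Nr_real: "filterlim (\<lambda>k. real (Nr k)) at_top sequentially"
    using assms(3) filterlim_sequentially_iff_filterlim_real by blast
  have Nr_pos: "eventually (\<lambda>k. 0 < real (Nr k)) sequentially"
    using Nr_real by (rule filterlim_at_top_dense[THEN iffD1, rule_format])
  show "((\<lambda>k. mmse_power_offset (Nr k) (Nt k)) \<longlongrightarrow> log 2 (\<beta> / (1 - \<beta>))) sequentially"
  proof (rule tendsto_mmse_power_offset)
    show "filterlim (\<lambda>k. Nr k - Nt k) at_top sequentially"
      unfolding filterlim_sequentially_iff_filterlim_real gap using assms(2)
      by (intro filterlim_tendsto_pos_mult_at_top[OF tendsto_const _ Nr_real]) simp
    show "eventually (\<lambda>k. 0 < Nt k \<and> Nt k < Nr k) sequentially"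
    proof (rule eventually_mono[OF Nr_pos])
      fix k
      assume "0 < real (Nr k)"
      then have "0 < real (Nt k)" and "0 < real (Nr k - Nt k)"
        using assms(1,2,4) gap by simp_all
      then show "0 < Nt k \<and> Nt k < Nr k"
        by simp
    qed
    show "((\<lambda>k. real (Nt k) / real (Nr k - Nt k)) \<longlongrightarrow> \<beta> / (1 - \<beta>)) sequentially"
      using Nr_pos by (rule Lim_transform_eventually[OF tendsto_const eventually_mono])
        (simp add: gap assms(4))
  qed (use assms(1,2) in simp)
qed

theorem corollary4:
  fixes \<beta> :: real and Nr Nt :: "nat \<Rightarrow> nat"
  assumes "0 < \<beta>" and "\<beta> \<le> 1"
    and "filterlim Nr at_top sequentially"
    and "\<forall>k. real (Nt k) = \<beta> * real (Nr k)"
  shows "(\<beta> < 1 \<longrightarrow>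
            ((\<lambda>k. mmse_power_offset (Nr k) (Nt k)) \<longlongrightarrow> log 2 (\<beta> / (1 - \<beta>))) sequentially)
       \<and> (\<beta> = 1 \<longrightarrow>
            filterlim (\<lambda>k. mmse_power_offset (Nr k) (Nt k)) at_top sequentially)"
proof (intro conjI impI)
  assume "\<beta> < 1"
  then show "((\<lambda>k. mmse_power_offset (Nr k) (Nt k)) \<longlongrightarrow> log 2 (\<beta> / (1 - \<beta>))) sequentially"
    using tendsto_mmse_power_offset_proportional assms(1,3,4) by blast
next
  assume "\<beta> = 1"
  then have "Nt = Nr"
    using assms(4) by auto
  then show "filterlim (\<lambda>k. mmse_power_offset (Nr k) (Nt k)) at_top sequentially"
    using filterlim_mmse_power_offset_diag[OF assms(3)] by simp
qed

end
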